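(* Let $G=(V,E)$ be a unit disk graph, $k$ a positive integer, $Y_k=(V,E_Y)$ its Yao graph and $YS_k=(V,E_{YS})$ the output of the Sink step applied to $Y_k$ (defined in the context). Then for each directed edge $\overrightarrow{uv}\in E_Y$ there is a sequence of vertices $w_0=v,w_1,\dots,w_h=u$, all lying in the cone $K_v(u)$, such that for each $i=1,\dots,h$: $\overrightarrow{w_iw_{i-1}}\in E_{YS}$, $w_i\in K_{w_{i-1}}(u)$, and $\mathrm{ID}(\overrightarrow{w_iw_{i-1}})\le \mathrm{ID}(\overrightarrow{uw_{i-1}})$.
   Context: Unit disk graph: $V$ a finite point set in the plane, $E=\{uv:|uv|\le1\}$ with $|uv|$ Euclidean distance. Cones: with $\theta=2\pi/k$, at each point $x$ the plane is partitioned into $k$ half-open half-closed cones with apex $x$ of angle $\theta$, bounded by $k$ equally spaced rays (same directions at every node); $K_x(y)$ is the cone with apex $x$ containing $y$; $K_x$ denotes an arbitrary such cone. Identifiers: nodes have distinct IDs; $\mathrm{ID}(\overrightarrow{xy})=(|xy|,\mathrm{ID}(x),\mathrm{ID}(y))$ compared lexicographically; $\mathrm{ID}(xy)=\min\{\mathrm{ID}(\overrightarrow{xy}),\mathrm{ID}(\overrightarrow{yx})\}$. Yao step: for each node $x$ and each cone $K_x$ containing the other endpoint of some edge of $E$ incident to $x$, add to $E_Y$ the directed edge $\overrightarrow{xy}$ where $xy$ is such an edge with lowest $\mathrm{ID}(xy)$. Sink step on $(V,E_Y)$: set $E_{YS}=\emptyset$. For each node $v$ and each cone $K_v$: let $I$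 be the set of vertices $x$ with $\overrightarrow{xv}\in E_Y$ and $x\in K_v$; set $I(v)\leftarrow I$ and initialize an ordered sequence $J\leftarrow(v)$ and $T(v)\leftarrow\emptyset$. Repeat until $I$ is empty: remove the first vertex $x$ from $J$; for each cone $K_x$ with apex $x$, let $w\in I(x)\cap K_x$ be the node minimizing $\mathrm{ID}(\overrightarrow{wx})$ (if any), add $\overrightarrow{wx}$ to $T(v)$, move $w$ from $I$ to $J$, and set $I(w)\leftarrow I(x)\cap K_x$. Then add all (directed) edges of $T(v)$ to $E_{YS}$. *)

theory Defs
  imports "HOL-Analysis.Analysis"
begin

text \<open>Cones: k cones of angle 2 pi / k,
bounded by rays at angles alpha + j 2pi/k (same at every node); cone j with apex x is
the set of points z different from x whose direction angle (measured from alpha,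
mod 2 pi) lies in the half-open interval [j 2pi/k, (j+1) 2pi/k).\<close>

definition cidx :: "nat \<Rightarrow> real \<Rightarrow> complex \<Rightarrow> complex \<Rightarrow> nat" where
  "cidx k \<alpha> x y = nat \<lfloor>real k * frac ((Arg (y - x) - \<alpha>) / (2 * pi))\<rfloor>"

definition cone :: "nat \<Rightarrow> real \<Rightarrow> complex \<Rightarrow> nat \<Rightarrow> complex set" where
  "cone k \<alpha> x j = {z. z \<noteq> x \<and> cidx k \<alpha> x z = j}"

text \<open>Directed identifier ID(xy) = (|xy|, ID x, ID y), compared lexicographically by lex_le.\<close>
definition lex_le :: "real \<times> nat \<times> nat \<Rightarrow> real \<times> nat \<times> nat \<Rightarrow> bool" where
  "lex_le p q = (case p of (a1, b1, c1) \<Rightarrow> case q of (a2, b2, c2) \<Rightarrow>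
     a1 < a2 \<or> (a1 = a2 \<and> (b1 < b2 \<or> (b1 = b2 \<and> c1 \<le> c2))))"

definition dID :: "(complex \<Rightarrow> nat) \<Rightarrow> complex \<Rightarrow> complex \<Rightarrow> real \<times> nat \<times> nat" where
  "dID idf x y = (cmod (x - y), idf x, idf y)"

definition uID :: "(complex \<Rightarrow> nat) \<Rightarrow> complex \<Rightarrow> complex \<Rightarrow> real \<times> nat \<times> nat" where
  "uID idf x y = (if lex_le (dID idf x y) (dID idf y x) then dID idf x y else dID idf y x)"

definition udg :: "complex set \<Rightarrow> (complex \<times> complex) set" where
  "udg V = {(x, y). x \<in> V \<and> y \<in> V \<and> x \<noteq> y \<and> cmod (x - y) \<le> 1}"

text \<open>Yao step: (x,y) means the directed edge x -> y.\<close>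
definition yao :: "nat \<Rightarrow> real \<Rightarrow> (complex \<Rightarrow> nat) \<Rightarrow> complex set \<Rightarrow> (complex \<times> complex) set" where
  "yao k \<alpha> idf V = {(x, y). (x, y) \<in> udg V \<and>
      (\<forall>z. (x, z) \<in> udg V \<and> cidx k \<alpha> x z = cidx k \<alpha> x y \<longrightarrow> lex_le (uID idf x y) (uID idf x z))}"

text \<open>Sink step. State: (I, J, I-map, T). Processing one cone c' of the current vertex x.\<close>
type_synonym sstate = "complex set \<times> complex list \<times> (complex \<Rightarrow> complex set) \<times> (complex \<times> complex) set"

definition proc_cone :: "nat \<Rightarrow> real \<Rightarrow> (complex \<Rightarrow> nat) \<Rightarrow> complex \<Rightarrow> sstate \<Rightarrow> nat \<Rightarrow> sstate" where
  "proc_cone k \<alpha> idf x st c' = (case st of (I, J, Imap, T) \<Rightarrow>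
     (let S = Imap x \<inter> cone k \<alpha> x c' in
      if S = {} then st else
      (let w = (THE w. w \<in> S \<and> (\<forall>w'\<in>S. lex_le (dID idf w x) (dID idf w' x))) in
        (I - {w}, J @ [w], Imap(w := S), insert (w, x) T))))"

inductive sink_run :: "nat \<Rightarrow> real \<Rightarrow> (complex \<Rightarrow> nat) \<Rightarrow> (complex \<times> complex) set \<Rightarrow>
    complex \<Rightarrow> nat \<Rightarrow> sstate \<Rightarrow> bool"
  for k \<alpha> idf EY v c where
  init: "I0 = {x. (x, v) \<in> EY \<and> x \<in> cone k \<alpha> v c} \<Longrightarrow>
         sink_run k \<alpha> idf EY v c (I0, [v], (\<lambda>_. {})(v := I0), {})"
| step: "sink_run k \<alpha> idf EY v c (I, x # J, Imap, T) \<Longrightarrow> I \<noteq> {} \<Longrightarrow>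
         sink_run k \<alpha> idf EY v c (foldl (proc_cone k \<alpha> idf x) (I, J, Imap, T) [0..<k])"

text \<open>E_YS: union of the final trees T(v) (the loop has terminated, i.e. I is empty).\<close>
definition sinkE :: "nat \<Rightarrow> real \<Rightarrow> (complex \<Rightarrow> nat) \<Rightarrow> complex set \<Rightarrow> (complex \<times> complex) set" where
  "sinkE k \<alpha> idf V = {e. \<exists>v\<in>V. \<exists>c<k. \<exists>J Imap T.
      sink_run k \<alpha> idf (yao k \<alpha> idf V) v c ({}, J, Imap, T) \<and> e \<in> T}"

end

theory Submission
  imports Defs
begin

text \<open>Fix the node v and the cone K of v that contains u. The Sink step keeps a queue J of nodes
whose pending sets I(x) are pairwise disjoint and cover the still unattached part I of the
Yao in-neighbours of v inside K. Processing x attaches, in each cone of x, the pending node w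
with the smallest identifier of the edge towards x; w inherits the pending nodes of that cone.
The invariant is that for every attached node y and every z \<in> I(y) there is a path from v to y
in T(v) all of whose edges a \<rightarrow> b satisfy a \<in> K, a \<in> K_b(z) and ID(a b) \<le> ID(z b): attaching w
in the cone of x containing z extends the path to x by the edge w \<rightarrow> x, which satisfies these
conditions by the choice of w. Since u \<in> I(u) once u is attached, and the loop terminates
(2|I| + |J| decreases), the final tree contains the required path from v to u.\<close>

lemma lex_le_refl: "lex_le p p"
  by (cases p) (auto simp: lex_le_def)

lemma lex_le_trans: "lex_le p q \<Longrightarrow> lex_le q r \<Longrightarrow> lex_le p r"
  by (cases p; cases q; cases r) (auto simp: lex_le_def)

lemma lex_le_total: "lex_le p q \<or> lex_le q p"
  by (cases p; cases q) (auto simp: lex_le_def)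

lemma lex_le_antisym: "lex_le p q \<Longrightarrow> lex_le q p \<Longrightarrow> p = q"
  by (cases p; cases q) (auto simp: lex_le_def)

lemma ex_lex_le_minimal:
  assumes "finite S" "S \<noteq> {}"
  shows "\<exists>w\<in>S. \<forall>w'\<in>S. lex_le (f w) (f w')"
  using assms
proof (induction S rule: finite_ne_induct)
  case (singleton x)
  then show ?case by (simp add: lex_le_refl)
next
  case (insert x F)
  then obtain w where w: "w \<in> F" "\<forall>w'\<in>F. lex_le (f w) (f w')" by blast
  show ?case
  proof (cases "lex_le (f x) (f w)")
    case True
    then show ?thesis using w by (auto intro: lex_le_trans lex_le_refl)
  next
    case False
    then have "lex_le (f w) (f x)" using lex_le_total by blast
    then show ?thesis using w by auto
  qed
qed

lemma cidx_less:
  assumes "0 < k"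
  shows "cidx k \<alpha> x y < k"
proof -
  let ?t = "frac ((Arg (y - x) - \<alpha>) / (2 * pi))"
  have "real k * ?t < real k" using assms frac_lt_1 by simp
  then have "\<lfloor>real k * ?t\<rfloor> < int k" by (simp add: floor_less_iff)
  then show ?thesis using assms by (simp add: cidx_def nat_less_iff)
qed

definition sink_measure :: "sstate \<Rightarrow> nat" where
  "sink_measure st = (case st of (I, J, _, _) \<Rightarrow> 2 * card I + length J)"

definition sink_tree :: "sstate \<Rightarrow> (complex \<times> complex) set" where
  "sink_tree st = (case st of (_, _, _, T) \<Rightarrow> T)"

locale sink_cone =
  fixes k :: nat and \<alpha> :: real and idf :: "complex \<Rightarrow> nat" and V :: "complex set"
    and v :: complex and c :: nat
  assumes finite_V: "finite V" and inj_idf: "inj_on idf V" and k_pos: "0 < k"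
begin

definition I_init :: "complex set" where
  "I_init = {x. (x, v) \<in> yao k \<alpha> idf V \<and> x \<in> cone k \<alpha> v c}"

lemma I_init_subset_V: "I_init \<subseteq> V"
  by (auto simp: I_init_def yao_def udg_def)

lemma I_init_subset_cone: "I_init \<subseteq> cone k \<alpha> v c"
  by (auto simp: I_init_def)

lemma apex_notin_I_init: "v \<notin> I_init"
  by (auto simp: I_init_def cone_def)

definition good_edge :: "(complex \<times> complex) set \<Rightarrow> complex \<Rightarrow> complex \<Rightarrow> complex \<Rightarrow> bool" where
  "good_edge T z a b \<longleftrightarrow> a \<in> cone k \<alpha> v c \<and> (a, b) \<in> T \<and> a \<in> cone k \<alpha> b (cidx k \<alpha> b z) \<and>
     lex_le (dID idf a b) (dID idf z b)"

definition good_path :: "(complex \<times> complex) set \<Rightarrow> complex \<Rightarrow> complex \<Rightarrow> complex list \<Rightarrow> bool" where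
  "good_path T z y ws \<longleftrightarrow> ws \<noteq> [] \<and> hd ws = v \<and> last ws = y \<and>
     (\<forall>i\<in>{1..<length ws}. good_edge T z (ws ! i) (ws ! (i - 1)))"

lemma good_path_mono: "good_path T z y ws \<Longrightarrow> T \<subseteq> T' \<Longrightarrow> good_path T' z y ws"
  unfolding good_path_def good_edge_def by blast

lemma good_path_snoc:
  assumes path: "good_path T z x ws" and "T \<subseteq> T'" and edge: "good_edge T' z w x"
  shows "good_path T' z w (ws @ [w])"
proof -
  have ws: "ws \<noteq> []" "hd ws = v" "last ws = x"
    and edges: "\<forall>i\<in>{1..<length ws}. good_edge T' z (ws ! i) (ws ! (i - 1))"
    using good_path_mono[OF path \<open>T \<subseteq> T'\<close>] by (auto simp: good_path_def)
  have "good_edge T' z ((ws @ [w]) ! i) ((ws @ [w]) ! (i - 1))" if "i \<in> {1..<length ws + 1}" for i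
  proof (cases "i < length ws")
    case True
    then show ?thesis using edges that by (auto simp: nth_append)
  next
    case False
    then have "i = length ws" using that by auto
    then show ?thesis using edge ws by (simp add: nth_append last_conv_nth)
  qed
  then show ?thesis using ws by (simp add: good_path_def)
qed

text \<open>The part of A not yet handed out once the cones 0, ..., j-1 of x have been processed.\<close>
definition unscanned :: "complex \<Rightarrow> nat \<Rightarrow> complex set \<Rightarrow> complex set" where
  "unscanned x j A = {z\<in>A. z \<noteq> x \<and> j \<le> cidx k \<alpha> x z}"

lemma unscanned_0: "unscanned x 0 A = A - {x}"
  by (auto simp: unscanned_def)

lemma unscanned_k: "unscanned x k A = {}"
  using cidx_less[OF k_pos] by (auto simp: unscanned_def not_le)

lemma unscanned_Suc: "unscanned x j A = unscanned x (Suc j) A \<union> (A \<inter> cone k \<alpha> x j)"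
  by (auto simp: unscanned_def cone_def)

lemma unscanned_Suc_disjoint: "unscanned x (Suc j) A \<inter> (A \<inter> cone k \<alpha> x j) = {}"
  by (auto simp: unscanned_def cone_def)

text \<open>P is the set of pending nodes of the node currently being processed that have not yet been
handed out; between two iterations of the loop it is empty.\<close>
definition queue_inv :: "complex set \<Rightarrow> complex list \<Rightarrow> (complex \<Rightarrow> complex set) \<Rightarrow>
    complex set \<Rightarrow> bool" where
  "queue_inv I J Imap P \<longleftrightarrow> I \<subseteq> I_init \<and> distinct J \<and> set J \<subseteq> insert v (I_init - I) \<and>
    P \<subseteq> I \<and> (\<forall>y\<in>set J. Imap y - {y} \<subseteq> I \<and> P \<inter> (Imap y - {y}) = {}) \<and>
    (\<forall>y\<in>set J. \<forall>y'\<in>set J. y \<noteq> y' \<longrightarrow> (Imap y - {y}) \<inter> (Imap y' - {y'}) = {}) \<and>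
    I \<subseteq> (\<Union>y\<in>set J. Imap y) \<union> P"

definition paths_inv :: "complex set \<Rightarrow> (complex \<Rightarrow> complex set) \<Rightarrow>
    (complex \<times> complex) set \<Rightarrow> bool" where
  "paths_inv I Imap T \<longleftrightarrow> (\<forall>y\<in>I_init - I. y \<in> Imap y) \<and>
    (\<forall>y\<in>insert v (I_init - I). \<forall>z\<in>Imap y. \<exists>ws. good_path T z y ws)"

lemma queue_inv_select:
  assumes inv: "queue_inv I J Imap P"
    and split: "P = P' \<union> S" "P' \<inter> S = {}" and w: "w \<in> S"
  shows "queue_inv (I - {w}) (J @ [w]) (Imap(w := S)) P'"
proof -
  have I: "I \<subseteq> I_init" "P \<subseteq> I" and J: "distinct J" "set J \<subseteq> insert v (I_init - I)"
    and owned: "\<And>y. y \<in> set J \<Longrightarrow> Imap y - {y} \<subseteq> I \<and> P \<inter> (Imap y - {y}) = {}"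
    and disjoint: "\<And>y y'. y \<in> set J \<Longrightarrow> y' \<in> set J \<Longrightarrow> y \<noteq> y' \<Longrightarrow>
      (Imap y - {y}) \<inter> (Imap y' - {y'}) = {}"
    and cover: "I \<subseteq> (\<Union>y\<in>set J. Imap y) \<union> P"
    using inv unfolding queue_inv_def by simp_all
  have "w \<in> I" using I(2) split w by blast
  then have "w \<notin> set J" using I(1) J(2) apex_notin_I_init by blast
  let ?M = "Imap(w := S)"
  have owned': "?M y - {y} \<subseteq> I - {w} \<and> P' \<inter> (?M y - {y}) = {}" if "y \<in> set (J @ [w])" for y
  proof (cases "y = w")
    case True
    then show ?thesis using I(2) split by auto
  next
    case False
    then have "y \<in> set J" using that by simp
    then show ?thesis using owned[of y] False split w by auto
  qed
  have disjoint': "(?M y - {y}) \<inter> (?M y' - {y'}) = {}"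
    if "y \<in> set (J @ [w])" "y' \<in> set (J @ [w])" "y \<noteq> y'" for y y'
  proof -
    have "(S - {w}) \<inter> (Imap z - {z}) = {}" if "z \<in> set J" for z
      using owned[OF that] split by blast
    then show ?thesis
      using that disjoint \<open>w \<notin> set J\<close> by (cases "y = w"; cases "y' = w") (auto simp: Int_commute)
  qed
  have cover': "I - {w} \<subseteq> (\<Union>y\<in>set (J @ [w]). ?M y) \<union> P'"
    using cover split \<open>w \<notin> set J\<close> by fastforce
  show ?thesis
    unfolding queue_inv_def
    using I J \<open>w \<in> I\<close> \<open>w \<notin> set J\<close> split w owned' disjoint' cover' by auto
qed

lemma paths_inv_select:
  assumes inv: "paths_inv I Imap T" and "I \<subseteq> I_init" and "w \<in> I"
    and x_attached: "x \<in> insert v (I_init - I)"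
    and w: "w \<in> Imap x \<inter> cone k \<alpha> x j"
    and w_min: "\<forall>z\<in>Imap x \<inter> cone k \<alpha> x j. lex_le (dID idf w x) (dID idf z x)"
  shows "paths_inv (I - {w}) (Imap(w := Imap x \<inter> cone k \<alpha> x j)) (insert (w, x) T)"
proof -
  let ?T' = "insert (w, x) T"
  have paths_w: "\<exists>ws. good_path ?T' z w ws" if z: "z \<in> Imap x \<inter> cone k \<alpha> x j" for z
  proof -
    have "\<forall>z\<in>Imap x. \<exists>ws. good_path T z x ws" using inv x_attached by (auto simp: paths_inv_def)
    then obtain ws where "good_path T z x ws" using z by blast
    moreover have "good_edge ?T' z w x"
      unfolding good_edge_def
    proof (intro conjI)
      show "w \<in> cone k \<alpha> v c" using \<open>w \<in> I\<close> \<open>I \<subseteq> I_init\<close> I_init_subset_cone by blast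
      have "cidx k \<alpha> x z = j" using z by (simp add: cone_def)
      then show "w \<in> cone k \<alpha> x (cidx k \<alpha> x z)" using w by simp
      show "lex_le (dID idf w x) (dID idf z x)" using w_min z by blast
    qed simp
    ultimately show ?thesis using good_path_snoc by blast
  qed
  have paths_old: "\<exists>ws. good_path ?T' z y ws" if "y \<in> insert v (I_init - I)" "z \<in> Imap y" for y z
  proof -
    have "\<forall>y\<in>insert v (I_init - I). \<forall>z\<in>Imap y. \<exists>ws. good_path T z y ws"
      using inv by (simp add: paths_inv_def)
    then show ?thesis using that good_path_mono[OF _ subset_insertI] by blast
  qed
  have attached: "\<forall>y\<in>I_init - I. y \<in> Imap y" using inv by (simp add: paths_inv_def)
  show ?thesis
    unfolding paths_inv_def
  proof (intro conjI ballI)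
    fix y assume y: "y \<in> I_init - (I - {w})"
    show "y \<in> (Imap(w := Imap x \<inter> cone k \<alpha> x j)) y"
    proof (cases "y = w")
      case True
      then show ?thesis using w by simp
    next
      case False
      then show ?thesis using y attached by simp
    qed
  next
    fix y z assume y: "y \<in> insert v (I_init - (I - {w}))"
      and z: "z \<in> (Imap(w := Imap x \<inter> cone k \<alpha> x j)) y"
    show "\<exists>ws. good_path ?T' z y ws"
    proof (cases "y = w")
      case True
      then show ?thesis using z paths_w by simp
    next
      case False
      then have "y \<in> insert v (I_init - I)" "z \<in> Imap y" using y z by auto
      then show ?thesis by (rule paths_old)
    qed
  qed
qed

lemma select_lex_min:
  fixes S :: "complex set" and x :: complex
  assumes "S \<noteq> {}" "S \<subseteq> V"
  defines "w \<equiv> THE w. w \<in> S \<and> (\<forall>w'\<in>S. lex_le (dID idf w x) (dID idf w' x))"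
  shows "w \<in> S \<and> (\<forall>w'\<in>S. lex_le (dID idf w x) (dID idf w' x))"
  unfolding w_def
proof (rule theI')
  obtain w where w: "w \<in> S" "\<forall>w'\<in>S. lex_le (dID idf w x) (dID idf w' x)"
    using ex_lex_le_minimal[of S "\<lambda>w. dID idf w x"] assms finite_V finite_subset by blast
  have "w' = w" if "w' \<in> S" "\<forall>w''\<in>S. lex_le (dID idf w' x) (dID idf w'' x)" for w'
  proof -
    have "dID idf w' x = dID idf w x" using w that lex_le_antisym by blast
    then have "idf w' = idf w" by (simp add: dID_def)
    then show ?thesis using inj_idf w(1) that(1) \<open>S \<subseteq> V\<close> by (auto dest: inj_onD)
  qed
  then show "\<exists>!w. w \<in> S \<and> (\<forall>w'\<in>S. lex_le (dID idf w x) (dID idf w' x))" using w by blast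
qed

text \<open>Invariant after processing the cones 0, ..., j-1 of the dequeued node x, whose pending set is A.\<close>
definition scan_inv :: "complex \<Rightarrow> complex set \<Rightarrow> nat \<Rightarrow> sstate \<Rightarrow> bool" where
  "scan_inv x A j st \<longleftrightarrow> (case st of (I, J, Imap, T) \<Rightarrow>
     queue_inv I J Imap (unscanned x j A) \<and> paths_inv I Imap T \<and> Imap x = A \<and> x \<notin> I \<and>
     x \<in> insert v (I_init - I))"

lemma proc_cone_scan_inv:
  assumes "scan_inv x A j st"
  defines "st' \<equiv> proc_cone k \<alpha> idf x st j"
  shows "scan_inv x A (Suc j) st' \<and> sink_tree st \<subseteq> sink_tree st' \<and>
    sink_measure st' \<le> sink_measure st"
proof -
  obtain I J Imap T where st: "st = (I, J, Imap, T)" by (metis prod_cases4)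
  define S where "S = Imap x \<inter> cone k \<alpha> x j"
  have inv: "queue_inv I J Imap (unscanned x j A)" "paths_inv I Imap T" "Imap x = A" "x \<notin> I"
    "x \<in> insert v (I_init - I)"
    using assms(1) by (auto simp: scan_inv_def st)
  then have S_pending: "S \<subseteq> I" and I_init: "I \<subseteq> I_init"
    using unscanned_Suc[of x j A] by (auto simp: S_def queue_inv_def)
  show ?thesis
  proof (cases "S = {}")
    case True
    then have "st' = st" by (simp add: st'_def st proc_cone_def S_def)
    moreover have "unscanned x (Suc j) A = unscanned x j A"
      using True unscanned_Suc[of x j A] inv(3) by (simp add: S_def)
    ultimately show ?thesis using assms(1) by (auto simp: scan_inv_def st)
  next
    case False
    define w where "w = (THE w. w \<in> S \<and> (\<forall>w'\<in>S. lex_le (dID idf w x) (dID idf w' x)))"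
    have w: "w \<in> S" "\<forall>w'\<in>S. lex_le (dID idf w x) (dID idf w' x)"
      using select_lex_min[OF False] S_pending I_init I_init_subset_V unfolding w_def by blast+
    have st': "st' = (I - {w}, J @ [w], Imap(w := S), insert (w, x) T)"
      using False by (simp add: st'_def st proc_cone_def Let_def S_def w_def)
    have "w \<in> I" "w \<noteq> x" using w S_pending by (auto simp: S_def cone_def)
    have "queue_inv (I - {w}) (J @ [w]) (Imap(w := S)) (unscanned x (Suc j) A)"
      using queue_inv_select[OF inv(1) unscanned_Suc unscanned_Suc_disjoint] w inv(3)
      by (simp add: S_def)
    moreover have "paths_inv (I - {w}) (Imap(w := S)) (insert (w, x) T)"
      using paths_inv_select[OF inv(2) I_init \<open>w \<in> I\<close> inv(5)] w by (simp add: S_def)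
    moreover have "card (I - {w}) = card I - 1" "card I \<ge> 1"
      using \<open>w \<in> I\<close> finite_subset[OF I_init_subset_V finite_V] finite_subset[OF I_init]
      by (auto simp: Suc_le_eq card_gt_0_iff)
    ultimately show ?thesis
      using inv \<open>w \<noteq> x\<close> by (auto simp: scan_inv_def st st' sink_tree_def sink_measure_def)
  qed
qed

lemma foldl_proc_cone_scan_inv:
  fixes n :: nat
  assumes "scan_inv x A 0 st"
  defines "st' \<equiv> foldl (proc_cone k \<alpha> idf x) st [0..<n]"
  shows "scan_inv x A n st' \<and> sink_tree st \<subseteq> sink_tree st' \<and> sink_measure st' \<le> sink_measure st"
  unfolding st'_def
proof (induction n)
  case 0
  then show ?case using assms(1) by simp
next
  case (Suc n)
  let ?st = "foldl (proc_cone k \<alpha> idf x) st [0..<n]"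
  have "scan_inv x A (Suc n) (proc_cone k \<alpha> idf x ?st n) \<and>
      sink_tree ?st \<subseteq> sink_tree (proc_cone k \<alpha> idf x ?st n) \<and>
      sink_measure (proc_cone k \<alpha> idf x ?st n) \<le> sink_measure ?st"
    using proc_cone_scan_inv Suc.IH by blast
  then show ?case using Suc.IH by auto
qed

definition sink_inv :: "sstate \<Rightarrow> bool" where
  "sink_inv st \<longleftrightarrow> (case st of (I, J, Imap, T) \<Rightarrow> queue_inv I J Imap {} \<and> paths_inv I Imap T)"

lemma sink_iteration_inv:
  assumes "sink_inv (I, x # J, Imap, T)"
  defines "st' \<equiv> foldl (proc_cone k \<alpha> idf x) (I, J, Imap, T) [0..<k]"
  shows "sink_inv st' \<and> T \<subseteq> sink_tree st' \<and> sink_measure st' < sink_measure (I, x # J, Imap, T)"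
proof -
  have "scan_inv x (Imap x) 0 (I, J, Imap, T)"
    using assms(1) apex_notin_I_init
    by (auto simp: sink_inv_def scan_inv_def queue_inv_def paths_inv_def unscanned_0)
  then have "scan_inv x (Imap x) k st' \<and> T \<subseteq> sink_tree st' \<and>
      sink_measure st' \<le> sink_measure (I, J, Imap, T)"
    using foldl_proc_cone_scan_inv[of x "Imap x" "(I, J, Imap, T)" k] unfolding st'_def
    by (simp add: sink_tree_def)
  then show ?thesis
    by (auto simp: sink_inv_def scan_inv_def unscanned_k sink_measure_def split: prod.splits)
qed

lemma sink_run_inv: "sink_run k \<alpha> idf (yao k \<alpha> idf V) v c st \<Longrightarrow> sink_inv st"
proof (induction rule: sink_run.induct)
  case (init I0)
  then have "I0 = I_init" by (simp add: I_init_def)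
  moreover have "good_path {} z v [v]" for z by (simp add: good_path_def)
  ultimately show ?case
    using apex_notin_I_init
    by (auto simp: sink_inv_def queue_inv_def paths_inv_def)
next
  case (step I x J Imap T)
  then show ?case using sink_iteration_inv by blast
qed

lemma sink_run_terminates:
  "sink_run k \<alpha> idf (yao k \<alpha> idf V) v c st \<Longrightarrow>
   \<exists>J' Imap' T'. sink_run k \<alpha> idf (yao k \<alpha> idf V) v c ({}, J', Imap', T') \<and> sink_tree st \<subseteq> T'"
proof (induction "sink_measure st" arbitrary: st rule: less_induct)
  case less
  obtain I J Imap T where st: "st = (I, J, Imap, T)" by (metis prod_cases4)
  show ?case
  proof (cases "I = {}")
    case True
    then show ?thesis using less.prems by (auto simp: st sink_tree_def)
  next
    case False
    have "queue_inv I J Imap {}" using sink_run_inv[OF less.prems] by (simp add: st sink_inv_def)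
    then obtain x J0 where J: "J = x # J0"
      using False by (cases J) (auto simp: queue_inv_def)
    define st' where "st' = foldl (proc_cone k \<alpha> idf x) (I, J0, Imap, T) [0..<k]"
    have "sink_run k \<alpha> idf (yao k \<alpha> idf V) v c st'"
      using sink_run.step less.prems False by (simp add: st J st'_def)
    moreover have "T \<subseteq> sink_tree st'" "sink_measure st' < sink_measure st"
      using sink_iteration_inv sink_run_inv[OF less.prems] by (simp_all add: st J st'_def)
    ultimately obtain J' Imap' T' where
        "sink_run k \<alpha> idf (yao k \<alpha> idf V) v c ({}, J', Imap', T')" "sink_tree st' \<subseteq> T'"
      using less.hyps by blast
    moreover have "sink_tree st = T" by (simp add: st sink_tree_def)
    ultimately show ?thesis using \<open>T \<subseteq> sink_tree st'\<close> by blast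
  qed
qed

end

theorem lemma2:
  fixes V :: "complex set" and k :: nat and \<alpha> :: real and idf :: "complex \<Rightarrow> nat"
    and u v :: complex
  assumes "finite V" and "inj_on idf V" and "k > 0"
    and "(u, v) \<in> yao k \<alpha> idf V"
  shows "\<exists>ws :: complex list. ws \<noteq> [] \<and> hd ws = v \<and> last ws = u \<and>
    (\<forall>i\<in>{1..<length ws}.
        ws ! i \<in> cone k \<alpha> v (cidx k \<alpha> v u) \<and>
        (ws ! i, ws ! (i - 1)) \<in> sinkE k \<alpha> idf V \<and>
        ws ! i \<in> cone k \<alpha> (ws ! (i - 1)) (cidx k \<alpha> (ws ! (i - 1)) u) \<and>
        lex_le (dID idf (ws ! i) (ws ! (i - 1))) (dID idf u (ws ! (i - 1))))"
proof -
  define c where "c = cidx k \<alpha> v u"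
  interpret sink_cone k \<alpha> idf V v c using assms(1-3) by unfold_locales
  have "v \<in> V" "u \<noteq> v" using assms(4) by (auto simp: yao_def udg_def)
  then have "u \<in> cone k \<alpha> v c" by (simp add: cone_def c_def)
  then have "u \<in> I_init" using assms(4) by (simp add: I_init_def)
  have "sink_run k \<alpha> idf (yao k \<alpha> idf V) v c (I_init, [v], (\<lambda>_. {})(v := I_init), {})"
    by (rule sink_run.init) (simp add: I_init_def)
  then obtain J Imap T where run: "sink_run k \<alpha> idf (yao k \<alpha> idf V) v c ({}, J, Imap, T)"
    using sink_run_terminates by blast
  have "paths_inv {} Imap T" using sink_run_inv[OF run] by (simp add: sink_inv_def)
  then have "u \<in> Imap u" "\<forall>z\<in>Imap u. \<exists>ws. good_path T z u ws"
    using \<open>u \<in> I_init\<close> by (simp_all add: paths_inv_def)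
  then obtain ws where ws: "good_path T u u ws" by blast
  have "c < k" using cidx_less[OF assms(3)] by (simp add: c_def)
  then have "T \<subseteq> sinkE k \<alpha> idf V" using run \<open>v \<in> V\<close> unfolding sinkE_def by blast
  then show ?thesis
    using ws unfolding good_path_def good_edge_def unfolding c_def by blast
qed

end
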